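(* Let $\varphi(z,x,y)$ satisfy conditions (C1)–(C5) stated in the context and the inequality $\varphi''(z,x,y)\geq c_7z^{-2}\varphi(z,x,y)$, $z>0$, with a constant $c_7$ independent of $z,x,y$. Assume that a function $\psi(z,x,y)$ is twice continuously differentiable in $z$ for almost all $(x,y)\in\Omega\times\Omega$, that for each $u\in L_{1,loc}(\Omega)$ the function $\psi(|u(x)-u(y)|,x,y)$ is measurable on $\Omega\times\Omega$, and that \[ \psi(0,x,y)=0,\qquad \psi'(0,x,y)=0,\qquad \big|\psi''(z,x,y)\big|\leq c_8\varphi''(z,x,y) \] for almost all $(x,y)\in\Omega\times\Omega$ and all $z>0$, where $c_8<1$ is a constant independent of $z,x,y$. Then the sum $\varphi(z,x,y)+\psi(z,x,y)$ satisfies conditions (C1)–(C5).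
   Context: $\Omega\subseteq\mathbb{R}^d$ is a domain; functions are defined on $\mathbb{R}_+\times\Omega\times\Omega$, derivatives are in the first variable. For a non-negative function $\varphi(t,x,y)$ the conditions are: (C1) for each $u\in L_{1,loc}(\Omega)$ the function $\varphi(|u(x)-u(y)|,x,y)$ is measurable on $\Omega\times\Omega$; (C2) for every $\varepsilon>0$ there is $\delta\in(0,1)$ with $\varphi(\frac{s+t}{2},x,y)\le(1-\delta)\frac{\varphi(s,x,y)+\varphi(t,x,y)}{2}$ for a.a. $(x,y)$ and all $s,t>0$ with $|s-t|\ge\varepsilon\max\{s,t\}$; (C3) there are constants $1<p_-\le p_+$ and $\beta\ge1$ such that $r(t)=\varphi(t,x,y)/t^{p_-}$ satisfies $r(s)\le\beta r(t)$ and $r(t)=\varphi(t,x,y)/t^{p_+}$ satisfies $\beta r(s)\ge r(t)$ for all $0\le s\le t$, a.a. $(x,y)$; (C4) $c_1^{-1}\le\varphi(1,x,y)\le c_1$, $\varphi(0,x,y)=0$, $\varphi(t,x,y)>0$ for $t>0$, a.a. $(x,y)$; (C5) $\varphi$ is differentiable in $t>0$ and $0<t\varphi'(t,x,y)\le c_2\varphi(t,x,y)$ with a constant $c_2>1$. *)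

theory Defs
  imports "HOL-Analysis.Analysis"
begin

definition loc_integrable :: "'a::euclidean_space set \<Rightarrow> ('a \<Rightarrow> real) \<Rightarrow> bool" where
  "loc_integrable \<Omega> u \<longleftrightarrow>
     u \<in> borel_measurable (lebesgue_on \<Omega>) \<and>
     (\<forall>K. compact K \<and> K \<subseteq> \<Omega> \<longrightarrow> set_integrable lebesgue K u)"

abbreviation ae_pairs :: "'a::euclidean_space set \<Rightarrow> ('a \<Rightarrow> 'a \<Rightarrow> bool) \<Rightarrow> bool" where
  "ae_pairs \<Omega> P \<equiv> (AE p in lebesgue. p \<in> \<Omega> \<times> \<Omega> \<longrightarrow> P (fst p) (snd p))"

definition condC1 :: "'a::euclidean_space set \<Rightarrow> (real \<Rightarrow> 'a \<Rightarrow> 'a \<Rightarrow> real) \<Rightarrow> bool" where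
  "condC1 \<Omega> \<phi> \<longleftrightarrow> (\<forall>u. loc_integrable \<Omega> u \<longrightarrow>
     (\<lambda>p. \<phi> \<bar>u (fst p) - u (snd p)\<bar> (fst p) (snd p)) \<in> borel_measurable (lebesgue_on (\<Omega> \<times> \<Omega>)))"

definition condC2 :: "'a::euclidean_space set \<Rightarrow> (real \<Rightarrow> 'a \<Rightarrow> 'a \<Rightarrow> real) \<Rightarrow> bool" where
  "condC2 \<Omega> \<phi> \<longleftrightarrow> (\<forall>\<epsilon>>0. \<exists>\<delta>. 0 < \<delta> \<and> \<delta> < 1 \<and>
     ae_pairs \<Omega> (\<lambda>x y. \<forall>s t. 0 < s \<and> 0 < t \<and> \<bar>s - t\<bar> \<ge> \<epsilon> * max s t \<longrightarrow>
        \<phi> ((s + t) / 2) x y \<le> (1 - \<delta>) * ((\<phi> s x y + \<phi> t x y) / 2)))"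

definition condC3 :: "'a::euclidean_space set \<Rightarrow> (real \<Rightarrow> 'a \<Rightarrow> 'a \<Rightarrow> real) \<Rightarrow> bool" where
  "condC3 \<Omega> \<phi> \<longleftrightarrow> (\<exists>pm pp \<beta>::real. 1 < pm \<and> pm \<le> pp \<and> 1 \<le> \<beta> \<and>
     ae_pairs \<Omega> (\<lambda>x y. \<forall>s t. 0 < s \<and> s \<le> t \<longrightarrow>
        \<phi> s x y / s powr pm \<le> \<beta> * (\<phi> t x y / t powr pm) \<and>
        \<beta> * (\<phi> s x y / s powr pp) \<ge> \<phi> t x y / t powr pp))"

definition condC4 :: "'a::euclidean_space set \<Rightarrow> (real \<Rightarrow> 'a \<Rightarrow> 'a \<Rightarrow> real) \<Rightarrow> bool" where
  "condC4 \<Omega> \<phi> \<longleftrightarrow> (\<exists>c1::real. 0 < c1 \<and>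
     ae_pairs \<Omega> (\<lambda>x y. inverse c1 \<le> \<phi> 1 x y \<and> \<phi> 1 x y \<le> c1 \<and> \<phi> 0 x y = 0 \<and>
        (\<forall>t>0. \<phi> t x y > 0)))"

definition condC5 :: "'a::euclidean_space set \<Rightarrow> (real \<Rightarrow> 'a \<Rightarrow> 'a \<Rightarrow> real) \<Rightarrow> bool" where
  "condC5 \<Omega> \<phi> \<longleftrightarrow> (\<exists>c2::real. 1 < c2 \<and>
     ae_pairs \<Omega> (\<lambda>x y. \<forall>t>0. \<exists>D. ((\<lambda>s. \<phi> s x y) has_real_derivative D) (at t) \<and>
        0 < t * D \<and> t * D \<le> c2 * \<phi> t x y))"

definition conds_C1_C5 :: "'a::euclidean_space set \<Rightarrow> (real \<Rightarrow> 'a \<Rightarrow> 'a \<Rightarrow> real) \<Rightarrow> bool" where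
  "conds_C1_C5 \<Omega> \<phi> \<longleftrightarrow> condC1 \<Omega> \<phi> \<and> condC2 \<Omega> \<phi> \<and> condC3 \<Omega> \<phi> \<and> condC4 \<Omega> \<phi> \<and> condC5 \<Omega> \<phi>"

end

theory Submission
  imports Defs
begin

(* Write P = \<phi>(.,x,y), Q = \<psi>(.,x,y) and F = P + Q. Since Q(0) = Q'(0) = 0 and
   |Q''| \<le> c8 P'', comparing derivatives from 0 upwards gives |Q'| \<le> c8 P' and then
   |Q| \<le> c8 P; hence F and F' agree with P and P' up to the factors 1 \<plusminus> c8, and
   F'' \<ge> (1 - c8) P'' \<ge> K F / z\<^sup>2 with K = (1 - c8) c7 / (1 + c8).
   Conditions (C3)-(C5) survive such two-sided comparisons (their constants are multiplied by
   (1 + c8)/(1 - c8)) and (C1) survives sums. (C2) follows from the curvature bound alone: for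
   0 < s < t with midpoint m, the tangent at m bounds F(s) from below, and on [m, t] we have
   F'' \<ge> K F(m) / t\<^sup>2, so F(s) + F(t) \<ge> 2 F(m) (1 + K (t - s)\<^sup>2 / (16 t\<^sup>2)). *)

lemma deriv_nonneg_imp_nondecreasing:
  fixes f f' :: "real \<Rightarrow> real"
  assumes "a \<le> b"
    and "\<And>x. a \<le> x \<Longrightarrow> x \<le> b \<Longrightarrow> (f has_real_derivative f' x) (at x)"
    and "\<And>x. a \<le> x \<Longrightarrow> x \<le> b \<Longrightarrow> 0 \<le> f' x"
  shows "f a \<le> f b"
  using assms by (intro DERIV_nonneg_imp_nondecreasing[OF assms(1)] exI conjI) auto

lemma le_if_deriv_le_from_0:
  fixes f g f' g' :: "real \<Rightarrow> real"
  assumes f: "\<And>t. 0 < t \<Longrightarrow> (f has_real_derivative f' t) (at t)"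
    and g: "\<And>t. 0 < t \<Longrightarrow> (g has_real_derivative g' t) (at t)"
    and deriv_le: "\<And>t. 0 < t \<Longrightarrow> f' t \<le> g' t"
    and g_nonneg: "\<And>t. 0 < t \<Longrightarrow> 0 \<le> g t"
    and f_lim: "(f \<longlongrightarrow> 0) (at_right 0)"
    and "0 < z"
  shows "f z \<le> g z"
proof -
  have "- f r \<le> g z - f z" if r: "0 < r" "r \<le> z" for r
  proof -
    have "g r - f r \<le> g z - f z"
      using r
      by (intro deriv_nonneg_imp_nondecreasing[OF r(2), where f' = "\<lambda>x. g' x - f' x"] DERIV_diff f g)
        (auto simp: deriv_le)
    with g_nonneg[OF r(1)] show ?thesis by linarith
  qed
  then have "eventually (\<lambda>r. - f r \<le> g z - f z) (at_right 0)"
    using eventually_at_right_real[OF \<open>0 < z\<close>] by (auto elim: eventually_mono)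
  with tendsto_minus[OF f_lim] have "0 \<le> g z - f z"
    by (intro tendsto_upperbound) auto
  then show ?thesis by simp
qed

lemma abs_le_if_abs_deriv_le_from_0:
  fixes f g f' g' :: "real \<Rightarrow> real"
  assumes f: "\<And>t. 0 < t \<Longrightarrow> (f has_real_derivative f' t) (at t)"
    and g: "\<And>t. 0 < t \<Longrightarrow> (g has_real_derivative g' t) (at t)"
    and deriv_le: "\<And>t. 0 < t \<Longrightarrow> \<bar>f' t\<bar> \<le> g' t"
    and g_nonneg: "\<And>t. 0 < t \<Longrightarrow> 0 \<le> g t"
    and f_lim: "(f \<longlongrightarrow> 0) (at_right 0)"
    and "0 < z"
  shows "\<bar>f z\<bar> \<le> g z"
proof -
  have "f' t \<le> g' t" "- f' t \<le> g' t" if "0 < t" for t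
    using deriv_le[OF that] by auto
  moreover have "((\<lambda>t. - f t) \<longlongrightarrow> 0) (at_right 0)"
    using tendsto_minus[OF f_lim] by simp
  ultimately have "f z \<le> g z" "- f z \<le> g z"
    using le_if_deriv_le_from_0[OF f g _ g_nonneg f_lim \<open>0 < z\<close>]
      le_if_deriv_le_from_0[OF DERIV_minus[OF f] g _ g_nonneg _ \<open>0 < z\<close>]
    by blast+
  then show ?thesis by linarith
qed

lemma second_order_lower_bound:
  fixes f f' f'' :: "real \<Rightarrow> real"
  assumes "m \<le> x"
    and f: "\<And>r. m \<le> r \<Longrightarrow> r \<le> x \<Longrightarrow> (f has_real_derivative f' r) (at r)"
    and f': "\<And>r. m \<le> r \<Longrightarrow> r \<le> x \<Longrightarrow> (f' has_real_derivative f'' r) (at r)"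
    and f''_ge: "\<And>r. m \<le> r \<Longrightarrow> r \<le> x \<Longrightarrow> a \<le> f'' r"
  shows "f m + f' m * (x - m) + a / 2 * (x - m)\<^sup>2 \<le> f x"
proof -
  have f'_ge: "f' m + a * (r - m) \<le> f' r" if r: "m \<le> r" "r \<le> x" for r
  proof -
    have "f' m - a * (m - m) \<le> f' r - a * (r - m)"
      using r by (intro deriv_nonneg_imp_nondecreasing[OF r(1), where f' = "\<lambda>r. f'' r - a"])
        (auto intro!: derivative_eq_intros f' simp: f''_ge)
    then show ?thesis by simp
  qed
  have "f m - f' m * (m - m) - a / 2 * (m - m)\<^sup>2 \<le> f x - f' m * (x - m) - a / 2 * (x - m)\<^sup>2"
    using \<open>m \<le> x\<close> f'_ge
    by (intro deriv_nonneg_imp_nondecreasing[OF \<open>m \<le> x\<close>, where f' = "\<lambda>r. f' r - f' m - a * (r - m)"])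
      (auto intro!: derivative_eq_intros f simp: field_simps)
  then show ?thesis by simp
qed

lemma midpoint_excess:
  fixes F F' F'' :: "real \<Rightarrow> real"
  assumes F: "\<And>t. 0 < t \<Longrightarrow> (F has_real_derivative F' t) (at t)"
    and F': "\<And>t. 0 < t \<Longrightarrow> (F' has_real_derivative F'' t) (at t)"
    and F_pos: "\<And>t. 0 < t \<Longrightarrow> 0 < F t"
    and F'_pos: "\<And>t. 0 < t \<Longrightarrow> 0 < F' t"
    and F''_ge: "\<And>t. 0 < t \<Longrightarrow> K * F t / t\<^sup>2 \<le> F'' t"
    and "0 \<le> K" "0 < s" "s < t"
  shows "2 * F ((s + t) / 2) + K * F ((s + t) / 2) * (t - s)\<^sup>2 / (8 * t\<^sup>2) \<le> F s + F t"
proof -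
  define m where "m = (s + t) / 2"
  have m: "0 < m" "s < m" "m < t"
    using \<open>0 < s\<close> \<open>s < t\<close> by (auto simp: m_def)
  have F''_nonneg: "0 \<le> F'' r" if "0 < r" for r
  proof -
    have "0 \<le> K * F r / r\<^sup>2"
      using F_pos[OF that] \<open>0 \<le> K\<close> by simp
    with F''_ge[OF that] show ?thesis by linarith
  qed
  have "convex_on {0<..} F"
    by (rule f''_ge0_imp_convex[where f' = F' and f'' = F'']) (simp_all add: F F' F''_nonneg)
  then have left: "F' m * (s - m) \<le> F s - F m"
    by (rule convex_on_imp_above_tangent[OF _ _ _ _ has_field_derivative_at_within[OF F[OF m(1)]]])
      (use m \<open>0 < s\<close> in \<open>simp_all add: connected_Ioi interior_open\<close>)
  have F_mono: "F m \<le> F r" if "m \<le> r" for r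
    by (rule deriv_nonneg_imp_nondecreasing[OF that, where f' = F'])
      (use m that in \<open>auto intro: F less_imp_le[OF F'_pos]\<close>)
  have "F m + F' m * (t - m) + K * F m / t\<^sup>2 / 2 * (t - m)\<^sup>2 \<le> F t"
  proof (rule second_order_lower_bound)
    fix r assume r: "m \<le> r" "r \<le> t"
    show "(F has_real_derivative F' r) (at r)" "(F' has_real_derivative F'' r) (at r)"
      using r m by (auto intro: F F')
    have "K * F m / t\<^sup>2 \<le> K * F r / t\<^sup>2"
      using F_mono[OF r(1)] \<open>0 \<le> K\<close> by (intro divide_right_mono mult_left_mono) auto
    also have "\<dots> \<le> K * F r / r\<^sup>2"
      using r m F_pos[of r] \<open>0 \<le> K\<close> by (intro divide_left_mono mult_nonneg_nonneg power_mono) auto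
    also have "\<dots> \<le> F'' r"
      using r m by (intro F''_ge) auto
    finally show "K * F m / t\<^sup>2 \<le> F'' r" .
  qed (use m in auto)
  moreover have "F' m * (s - m) = - (F' m * (t - m))"
    by (simp add: m_def field_simps)
  moreover have "K * F m / t\<^sup>2 / 2 * (t - m)\<^sup>2 = K * F m * (t - s)\<^sup>2 / (8 * t\<^sup>2)"
    by (simp add: m_def field_simps)
  ultimately show ?thesis
    using left unfolding m_def[symmetric] by linarith
qed

lemma midpoint_contraction:
  fixes F F' F'' :: "real \<Rightarrow> real"
  assumes F: "\<And>t. 0 < t \<Longrightarrow> (F has_real_derivative F' t) (at t)"
    and F': "\<And>t. 0 < t \<Longrightarrow> (F' has_real_derivative F'' t) (at t)"
    and F_pos: "\<And>t. 0 < t \<Longrightarrow> 0 < F t"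
    and F'_pos: "\<And>t. 0 < t \<Longrightarrow> 0 < F' t"
    and F''_ge: "\<And>t. 0 < t \<Longrightarrow> K * F t / t\<^sup>2 \<le> F'' t"
    and "0 \<le> K" "0 < \<epsilon>" "0 < s" "0 < t" "\<epsilon> * max s t \<le> \<bar>s - t\<bar>"
  shows "F ((s + t) / 2) \<le> (1 - K * \<epsilon>\<^sup>2 / 16 / (1 + K * \<epsilon>\<^sup>2 / 16)) * ((F s + F t) / 2)"
proof -
  define \<kappa> where "\<kappa> = K * \<epsilon>\<^sup>2 / 16"
  have gain: "2 * (1 + \<kappa>) * F ((u + v) / 2) \<le> F u + F v"
    if uv: "0 < u" "u < v" "\<epsilon> * v \<le> v - u" for u v
  proof -
    have "(\<epsilon> * v)\<^sup>2 \<le> (v - u)\<^sup>2"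
      using uv \<open>0 < \<epsilon>\<close> by (intro power_mono) auto
    then have "\<epsilon>\<^sup>2 \<le> (v - u)\<^sup>2 / v\<^sup>2"
      using uv by (simp add: field_simps)
    have "2 * (1 + \<kappa>) * F ((u + v) / 2) = 2 * F ((u + v) / 2) + K * F ((u + v) / 2) * \<epsilon>\<^sup>2 / 8"
      by (simp add: \<kappa>_def field_simps)
    also have "\<dots> \<le> 2 * F ((u + v) / 2) + K * F ((u + v) / 2) * ((v - u)\<^sup>2 / v\<^sup>2) / 8"
      using \<open>\<epsilon>\<^sup>2 \<le> (v - u)\<^sup>2 / v\<^sup>2\<close> uv F_pos[of "(u + v) / 2"] \<open>0 \<le> K\<close>
      by (intro add_left_mono divide_right_mono mult_left_mono) auto
    also have "\<dots> \<le> F u + F v"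
      using midpoint_excess[OF F F' F_pos F'_pos F''_ge \<open>0 \<le> K\<close> uv(1,2)] by simp
    finally show ?thesis .
  qed
  have "s \<noteq> t"
    using assms(7,9,10) by (auto simp: mult_le_0_iff)
  then have "2 * (1 + \<kappa>) * F ((s + t) / 2) \<le> F s + F t"
    using gain[of s t] gain[of t s] assms(8-10) by (cases "s < t") (auto simp: max_def add.commute)
  moreover have "0 \<le> \<kappa>"
    using \<open>0 \<le> K\<close> by (simp add: \<kappa>_def)
  ultimately show ?thesis
    unfolding \<kappa>_def[symmetric] by (simp add: field_simps)
qed

lemma tendsto_at_right_0_if_deriv_within:
  fixes f :: "real \<Rightarrow> real"
  assumes "(f has_real_derivative D) (at 0 within {0..})"
  shows "(f \<longlongrightarrow> f 0) (at_right 0)"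
proof -
  have "(f \<longlongrightarrow> f 0) (at 0 within {0..})"
    using DERIV_continuous[OF assms] by (simp add: continuous_within)
  then show ?thesis
    by (rule tendsto_within_subset) auto
qed

lemma at_within_atLeast_0: "0 < (t::real) \<Longrightarrow> at t within {0..} = at t"
  by (intro at_within_interior) simp

locale small_perturbation =
  fixes P P' P'' Q Q' Q'' :: "real \<Rightarrow> real" and c7 e :: real
  assumes P_deriv: "\<And>t. 0 < t \<Longrightarrow> (P has_real_derivative P' t) (at t)"
    and P'_deriv: "\<And>t. 0 < t \<Longrightarrow> (P' has_real_derivative P'' t) (at t)"
    and P_pos: "\<And>t. 0 < t \<Longrightarrow> 0 < P t"
    and P'_pos: "\<And>t. 0 < t \<Longrightarrow> 0 < P' t"
    and P''_ge: "\<And>t. 0 < t \<Longrightarrow> c7 / t\<^sup>2 * P t \<le> P'' t"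
    and c7_pos: "0 < c7"
    and Q_deriv: "\<And>z. 0 \<le> z \<Longrightarrow> (Q has_real_derivative Q' z) (at z within {0..})"
    and Q'_deriv: "\<And>z. 0 \<le> z \<Longrightarrow> (Q' has_real_derivative Q'' z) (at z within {0..})"
    and Q_0: "Q 0 = 0" and Q'_0: "Q' 0 = 0"
    and Q''_bound: "\<And>t. 0 < t \<Longrightarrow> \<bar>Q'' t\<bar> \<le> e * P'' t"
    and e_less_1: "e < 1"
begin

lemma P''_pos:
  assumes "0 < t"
  shows "0 < P'' t"
proof -
  have "0 < c7 / t\<^sup>2 * P t"
    using P_pos[OF assms] c7_pos assms by simp
  with P''_ge[OF assms] show ?thesis
    by linarith
qed

lemma e_nonneg: "0 \<le> e"
proof -
  have "0 \<le> e * P'' 1"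
    using Q''_bound[of 1] by simp
  with P''_pos[of 1] show ?thesis
    by (simp add: zero_le_mult_iff)
qed

lemma Q_deriv_at: "0 < t \<Longrightarrow> (Q has_real_derivative Q' t) (at t)"
  using Q_deriv[of t] at_within_atLeast_0[of t] by simp

lemma Q'_deriv_at: "0 < t \<Longrightarrow> (Q' has_real_derivative Q'' t) (at t)"
  using Q'_deriv[of t] at_within_atLeast_0[of t] by simp

lemma abs_Q'_le:
  assumes "0 < t"
  shows "\<bar>Q' t\<bar> \<le> e * P' t"
proof (rule abs_le_if_abs_deriv_le_from_0[where f = Q' and g = "\<lambda>t. e * P' t" and f' = Q''
      and g' = "\<lambda>t. e * P'' t"])
  fix s :: real
  assume "0 < s"
  show "(Q' has_real_derivative Q'' s) (at s)"
    using \<open>0 < s\<close> by (rule Q'_deriv_at)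
  show "((\<lambda>t. e * P' t) has_real_derivative e * P'' s) (at s)"
    using P'_deriv[OF \<open>0 < s\<close>] by (rule DERIV_cmult)
  show "\<bar>Q'' s\<bar> \<le> e * P'' s"
    using \<open>0 < s\<close> by (rule Q''_bound)
  show "0 \<le> e * P' s"
    using e_nonneg P'_pos[OF \<open>0 < s\<close>] by simp
next
  show "(Q' \<longlongrightarrow> 0) (at_right 0)"
    using tendsto_at_right_0_if_deriv_within[OF Q'_deriv[of 0]] Q'_0 by simp
qed (fact assms)

lemma abs_Q_le:
  assumes "0 < t"
  shows "\<bar>Q t\<bar> \<le> e * P t"
proof (rule abs_le_if_abs_deriv_le_from_0[where f = Q and g = "\<lambda>t. e * P t" and f' = Q'
      and g' = "\<lambda>t. e * P' t"])
  fix s :: real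
  assume "0 < s"
  show "(Q has_real_derivative Q' s) (at s)"
    using \<open>0 < s\<close> by (rule Q_deriv_at)
  show "((\<lambda>t. e * P t) has_real_derivative e * P' s) (at s)"
    using P_deriv[OF \<open>0 < s\<close>] by (rule DERIV_cmult)
  show "\<bar>Q' s\<bar> \<le> e * P' s"
    using \<open>0 < s\<close> by (rule abs_Q'_le)
  show "0 \<le> e * P s"
    using e_nonneg P_pos[OF \<open>0 < s\<close>] by simp
next
  show "(Q \<longlongrightarrow> 0) (at_right 0)"
    using tendsto_at_right_0_if_deriv_within[OF Q_deriv[of 0]] Q_0 by simp
qed (fact assms)

lemma sum_sandwich: "\<forall>t>0. (1 - e) * P t \<le> P t + Q t \<and> P t + Q t \<le> (1 + e) * P t"
proof (intro allI impI)
  fix t :: real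
  assume "0 < t"
  with abs_Q_le[OF this] show "(1 - e) * P t \<le> P t + Q t \<and> P t + Q t \<le> (1 + e) * P t"
    by (auto simp: algebra_simps abs_le_iff)
qed

lemma sum_deriv_sandwich:
  "\<forall>t>0. (1 - e) * P t \<le> P t + Q t \<and> (\<exists>D E. (P has_real_derivative D) (at t) \<and>
     ((\<lambda>s. P s + Q s) has_real_derivative E) (at t) \<and> (1 - e) * D \<le> E \<and> E \<le> (1 + e) * D)"
proof (intro allI impI conjI exI)
  fix t :: real
  assume "0 < t"
  show "(1 - e) * P t \<le> P t + Q t"
    using sum_sandwich \<open>0 < t\<close> by blast
  show "(P has_real_derivative P' t) (at t)"
    using \<open>0 < t\<close> by (rule P_deriv)
  show "((\<lambda>s. P s + Q s) has_real_derivative P' t + Q' t) (at t)"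
    using P_deriv[OF \<open>0 < t\<close>] Q_deriv_at[OF \<open>0 < t\<close>] by (rule DERIV_add)
  show "(1 - e) * P' t \<le> P' t + Q' t" "P' t + Q' t \<le> (1 + e) * P' t"
    using abs_Q'_le[OF \<open>0 < t\<close>] by (auto simp: algebra_simps abs_le_iff)
qed

lemma sum_curvature:
  "\<exists>F' F''. \<forall>t>0. ((\<lambda>s. P s + Q s) has_real_derivative F' t) (at t) \<and>
     (F' has_real_derivative F'' t) (at t) \<and>
     0 < P t + Q t \<and> 0 < F' t \<and> (1 - e) / (1 + e) * c7 * (P t + Q t) / t\<^sup>2 \<le> F'' t"
proof (rule exI[of _ "\<lambda>s. P' s + Q' s"], rule exI[of _ "\<lambda>s. P'' s + Q'' s"], intro allI impI conjI)
  fix t :: real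
  assume "0 < t"
  show "((\<lambda>s. P s + Q s) has_real_derivative P' t + Q' t) (at t)"
    using P_deriv[OF \<open>0 < t\<close>] Q_deriv_at[OF \<open>0 < t\<close>] by (rule DERIV_add)
  show "((\<lambda>s. P' s + Q' s) has_real_derivative P'' t + Q'' t) (at t)"
    using P'_deriv[OF \<open>0 < t\<close>] Q'_deriv_at[OF \<open>0 < t\<close>] by (rule DERIV_add)
  have "0 < (1 - e) * P t" "0 < (1 - e) * P' t"
    using e_less_1 P_pos[OF \<open>0 < t\<close>] P'_pos[OF \<open>0 < t\<close>] by simp_all
  then show "0 < P t + Q t" "0 < P' t + Q' t"
    using abs_Q_le[OF \<open>0 < t\<close>] abs_Q'_le[OF \<open>0 < t\<close>] by (auto simp: algebra_simps abs_le_iff)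
  have "(1 - e) / (1 + e) * c7 * (P t + Q t) / t\<^sup>2 \<le> (1 - e) / (1 + e) * c7 * ((1 + e) * P t) / t\<^sup>2"
    using sum_sandwich \<open>0 < t\<close> e_nonneg e_less_1 c7_pos
    by (intro divide_right_mono mult_left_mono) auto
  also have "\<dots> = (1 - e) * (c7 / t\<^sup>2 * P t)"
    using e_nonneg \<open>0 < t\<close> by (simp add: divide_simps)
  also have "\<dots> \<le> (1 - e) * P'' t"
    using P''_ge[OF \<open>0 < t\<close>] e_less_1 by (intro mult_left_mono) auto
  also have "\<dots> \<le> P'' t + Q'' t"
    using Q''_bound[OF \<open>0 < t\<close>] by (auto simp: algebra_simps abs_le_iff)
  finally show "(1 - e) / (1 + e) * c7 * (P t + Q t) / t\<^sup>2 \<le> P'' t + Q'' t" .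
qed

end

lemma ex_small_perturbation:
  fixes P Q :: "real \<Rightarrow> real"
  assumes P_pos: "\<forall>t>0. 0 < P t"
    and P_increasing: "\<forall>t>0. \<exists>D. (P has_real_derivative D) (at t) \<and> 0 < t * D"
    and P_curvature: "\<forall>z>0. (deriv P has_real_derivative deriv (deriv P) z) (at z) \<and>
          deriv (deriv P) z \<ge> c7 / z\<^sup>2 * P z"
    and Q: "\<exists>Q' Q''. (\<forall>z\<ge>0. (Q has_real_derivative Q' z) (at z within {0..})) \<and>
          (\<forall>z\<ge>0. (Q' has_real_derivative Q'' z) (at z within {0..})) \<and> Q 0 = 0 \<and> Q' 0 = 0 \<and>
          (\<forall>z>0. \<bar>Q'' z\<bar> \<le> c8 * deriv (deriv P) z)"
    and "0 < c7" and "c8 < 1"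
  shows "\<exists>Q' Q''. small_perturbation P (deriv P) (deriv (deriv P)) Q Q' Q'' c7 (max 0 c8)"
proof -
  from Q obtain Q' Q'' where Q_deriv: "\<forall>z\<ge>0. (Q has_real_derivative Q' z) (at z within {0..})"
    and Q'_deriv: "\<forall>z\<ge>0. (Q' has_real_derivative Q'' z) (at z within {0..})"
    and "Q 0 = 0" "Q' 0 = 0" and Q''_bound: "\<forall>z>0. \<bar>Q'' z\<bar> \<le> c8 * deriv (deriv P) z"
    by blast
  have P_deriv: "(P has_real_derivative deriv P t) (at t)" and P'_pos: "0 < deriv P t"
    if "0 < t" for t
  proof -
    obtain D where D: "(P has_real_derivative D) (at t)" "0 < t * D"
      using P_increasing \<open>0 < t\<close> by blast
    moreover have "deriv P t = D"
      using D(1) by (rule DERIV_imp_deriv)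
    ultimately show "(P has_real_derivative deriv P t) (at t)" "0 < deriv P t"
      using \<open>0 < t\<close> by (auto simp: zero_less_mult_iff)
  qed
  have "\<bar>Q'' t\<bar> \<le> max 0 c8 * deriv (deriv P) t" if "0 < t" for t
  proof -
    have "0 < c7 / t\<^sup>2 * P t"
      using \<open>0 < c7\<close> P_pos \<open>0 < t\<close> by simp
    with P_curvature \<open>0 < t\<close> have "0 \<le> deriv (deriv P) t"
      by (meson less_le_trans less_imp_le)
    then have "c8 * deriv (deriv P) t \<le> max 0 c8 * deriv (deriv P) t"
      by (intro mult_right_mono) auto
    with Q''_bound \<open>0 < t\<close> show ?thesis
      by (meson order_trans)
  qed
  then have "small_perturbation P (deriv P) (deriv (deriv P)) Q Q' Q'' c7 (max 0 c8)"
    using P_pos P_deriv P'_pos P_curvature Q_deriv Q'_deriv \<open>Q 0 = 0\<close> \<open>Q' 0 = 0\<close> \<open>0 < c7\<close> \<open>c8 < 1\<close>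
    by unfold_locales (auto simp: mult.commute)
  then show ?thesis
    by blast
qed

lemma condC1_add:
  assumes "condC1 \<Omega> \<phi>" and "condC1 \<Omega> \<psi>"
  shows "condC1 \<Omega> (\<lambda>z x y. \<phi> z x y + \<psi> z x y)"
  using assms unfolding condC1_def by (auto intro!: borel_measurable_add)

lemma condC2_if_curvature_bound:
  fixes F :: "real \<Rightarrow> 'a::euclidean_space \<Rightarrow> 'a \<Rightarrow> real"
  assumes "0 < K"
    and curvature: "ae_pairs \<Omega> (\<lambda>x y. \<exists>F' F''. \<forall>t>0.
          ((\<lambda>s. F s x y) has_real_derivative F' t) (at t) \<and> (F' has_real_derivative F'' t) (at t) \<and>
          0 < F t x y \<and> 0 < F' t \<and> K * F t x y / t\<^sup>2 \<le> F'' t)"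
  shows "condC2 \<Omega> F"
  unfolding condC2_def
proof (intro allI impI)
  fix \<epsilon> :: real
  assume "0 < \<epsilon>"
  define \<kappa> where "\<kappa> = K * \<epsilon>\<^sup>2 / 16"
  define \<delta> where "\<delta> = \<kappa> / (1 + \<kappa>)"
  have "0 < \<kappa>"
    using \<open>0 < K\<close> \<open>0 < \<epsilon>\<close> by (simp add: \<kappa>_def)
  then have "0 < \<delta>" "\<delta> < 1"
    by (auto simp: \<delta>_def)
  moreover have "ae_pairs \<Omega> (\<lambda>x y. \<forall>s t. 0 < s \<and> 0 < t \<and> \<bar>s - t\<bar> \<ge> \<epsilon> * max s t \<longrightarrow>
      F ((s + t) / 2) x y \<le> (1 - \<delta>) * ((F s x y + F t x y) / 2))"
    using curvature
  proof eventually_elim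
    case (elim p)
    then show ?case
      using midpoint_contraction[of "\<lambda>s. F s (fst p) (snd p)" _ _ K \<epsilon>] \<open>0 < K\<close> \<open>0 < \<epsilon>\<close>
      by (fastforce simp: \<delta>_def \<kappa>_def)
  qed
  ultimately show "\<exists>\<delta>. 0 < \<delta> \<and> \<delta> < 1 \<and> ae_pairs \<Omega> (\<lambda>x y. \<forall>s t.
      0 < s \<and> 0 < t \<and> \<bar>s - t\<bar> \<ge> \<epsilon> * max s t \<longrightarrow>
      F ((s + t) / 2) x y \<le> (1 - \<delta>) * ((F s x y + F t x y) / 2))"
    by blast
qed

lemma scaled_ratio_le:
  fixes a b \<beta> f1 f2 g1 g2 u v :: real
  assumes "f1 / u \<le> \<beta> * (f2 / v)" and "g1 \<le> b * f1" and "a * f2 \<le> g2"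
    and "0 < a" and "a \<le> b" and "0 \<le> \<beta>" and "0 < u" and "0 < v"
  shows "g1 / u \<le> \<beta> * b / a * (g2 / v)"
proof -
  have "g1 / u \<le> b * (f1 / u)"
    using assms by (simp add: divide_right_mono)
  also have "\<dots> \<le> b * (\<beta> * (f2 / v))"
    using assms by (intro mult_left_mono) auto
  also have "\<dots> = \<beta> * b / a * (a * f2 / v)"
    using \<open>0 < a\<close> by simp
  also have "\<dots> \<le> \<beta> * b / a * (g2 / v)"
    using assms by (intro mult_left_mono divide_right_mono) auto
  finally show ?thesis .
qed

lemma ratio_bounds_if_sandwiched:
  fixes f g :: "real \<Rightarrow> real"
  assumes ratio: "\<forall>s t. 0 < s \<and> s \<le> t \<longrightarrow>
        f s / s powr pm \<le> \<beta> * (f t / t powr pm) \<and> \<beta> * (f s / s powr pp) \<ge> f t / t powr pp"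
    and sandwich: "\<forall>t>0. a * f t \<le> g t \<and> g t \<le> b * f t"
    and "0 < a" and "a \<le> b" and "0 \<le> \<beta>"
  shows "\<forall>s t. 0 < s \<and> s \<le> t \<longrightarrow>
        g s / s powr pm \<le> \<beta> * b / a * (g t / t powr pm) \<and>
        \<beta> * b / a * (g s / s powr pp) \<ge> g t / t powr pp"
proof (intro allI impI conjI)
  fix s t :: real
  assume st: "0 < s \<and> s \<le> t"
  then have "0 < t"
    by simp
  show "g s / s powr pm \<le> \<beta> * b / a * (g t / t powr pm)"
    using ratio sandwich st \<open>0 < t\<close> assms(3-5) by (intro scaled_ratio_le[where a = a]) auto
  show "g t / t powr pp \<le> \<beta> * b / a * (g s / s powr pp)"
    using ratio sandwich st \<open>0 < t\<close> assms(3-5)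
    by (intro scaled_ratio_le[where a = a]) (auto simp: mult.commute)
qed

lemma condC3_if_sandwiched:
  assumes "condC3 \<Omega> \<phi>" and "0 < a" and "a \<le> b"
    and sandwich: "ae_pairs \<Omega> (\<lambda>x y. \<forall>t>0. a * \<phi> t x y \<le> F t x y \<and> F t x y \<le> b * \<phi> t x y)"
  shows "condC3 \<Omega> F"
proof -
  from assms(1) obtain pm pp \<beta> where exponents: "1 < pm" "pm \<le> pp" and "1 \<le> \<beta>"
    and ratio: "ae_pairs \<Omega> (\<lambda>x y. \<forall>s t. 0 < s \<and> s \<le> t \<longrightarrow>
        \<phi> s x y / s powr pm \<le> \<beta> * (\<phi> t x y / t powr pm) \<and>
        \<beta> * (\<phi> s x y / s powr pp) \<ge> \<phi> t x y / t powr pp)"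
    unfolding condC3_def by blast
  have "0 \<le> b"
    using \<open>0 < a\<close> \<open>a \<le> b\<close> by simp
  then have "a \<le> \<beta> * b"
    using mult_right_mono[OF \<open>1 \<le> \<beta>\<close>] \<open>a \<le> b\<close> by fastforce
  then have "1 \<le> \<beta> * b / a"
    using \<open>0 < a\<close> by simp
  moreover have "ae_pairs \<Omega> (\<lambda>x y. \<forall>s t. 0 < s \<and> s \<le> t \<longrightarrow>
      F s x y / s powr pm \<le> \<beta> * b / a * (F t x y / t powr pm) \<and>
      \<beta> * b / a * (F s x y / s powr pp) \<ge> F t x y / t powr pp)"
    using ratio sandwich
  proof eventually_elim
    case (elim p)
    show ?case
      using elim ratio_bounds_if_sandwiched[of "\<lambda>s. \<phi> s (fst p) (snd p)" pm \<beta> pp a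
          "\<lambda>s. F s (fst p) (snd p)" b]
        \<open>0 < a\<close> \<open>a \<le> b\<close> \<open>1 \<le> \<beta>\<close> by simp
  qed
  ultimately show ?thesis
    using exponents unfolding condC3_def by blast
qed

lemma condC4_if_sandwiched:
  assumes "condC4 \<Omega> \<phi>" and "0 < a" and "a \<le> 1" and "1 \<le> b"
    and sandwich: "ae_pairs \<Omega> (\<lambda>x y. F 0 x y = 0 \<and>
          (\<forall>t>0. a * \<phi> t x y \<le> F t x y \<and> F t x y \<le> b * \<phi> t x y))"
  shows "condC4 \<Omega> F"
proof -
  from assms(1) obtain c1 where "0 < c1"
    and bounds: "ae_pairs \<Omega> (\<lambda>x y. inverse c1 \<le> \<phi> 1 x y \<and> \<phi> 1 x y \<le> c1 \<and> \<phi> 0 x y = 0 \<and>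
        (\<forall>t>0. \<phi> t x y > 0))"
    unfolding condC4_def by blast
  have lower: "inverse (c1 * b / a) \<le> a * inverse c1"
    using \<open>0 < c1\<close> assms(2,4) by (simp add: field_simps)
  have upper: "b * c1 \<le> c1 * b / a"
    using \<open>0 < c1\<close> assms(2-4) by (simp add: field_simps mult_left_le)
  have "0 < c1 * b / a"
    using \<open>0 < c1\<close> assms(2,4) by simp
  moreover have "ae_pairs \<Omega> (\<lambda>x y. inverse (c1 * b / a) \<le> F 1 x y \<and> F 1 x y \<le> c1 * b / a \<and>
      F 0 x y = 0 \<and> (\<forall>t>0. F t x y > 0))"
    using bounds sandwich
  proof eventually_elim
    case (elim p)
    show ?case
      using elim lower upper assms(2-4) by (smt (verit) mult_left_mono mult_pos_pos)
  qed
  ultimately show ?thesis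
    unfolding condC4_def by blast
qed

lemma growth_bound_if_sandwiched:
  fixes f g :: "real \<Rightarrow> real"
  assumes growth: "\<forall>t>0. \<exists>D. (f has_real_derivative D) (at t) \<and> 0 < t * D \<and> t * D \<le> c * f t"
    and sandwich: "\<forall>t>0. a * f t \<le> g t \<and> (\<exists>D E. (f has_real_derivative D) (at t) \<and>
          (g has_real_derivative E) (at t) \<and> a * D \<le> E \<and> E \<le> b * D)"
    and "0 < a" and "a \<le> b" and "0 \<le> c"
  shows "\<forall>t>0. \<exists>E. (g has_real_derivative E) (at t) \<and> 0 < t * E \<and> t * E \<le> c * b / a * g t"
proof (intro allI impI)
  fix t :: real
  assume "0 < t"
  obtain D where D: "(f has_real_derivative D) (at t)" "0 < t * D" "t * D \<le> c * f t"
    using growth \<open>0 < t\<close> by blast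
  obtain D' E where D': "(f has_real_derivative D') (at t)"
    and E: "(g has_real_derivative E) (at t)"
    and "a * D' \<le> E" "E \<le> b * D'" and "a * f t \<le> g t"
    using sandwich \<open>0 < t\<close> by blast
  have "D' = D"
    using DERIV_unique[OF D' D(1)] .
  show "\<exists>E. (g has_real_derivative E) (at t) \<and> 0 < t * E \<and> t * E \<le> c * b / a * g t"
  proof (intro exI[of _ E] conjI)
    have "0 < a * (t * D)"
      using \<open>0 < a\<close> D(2) by simp
    also have "\<dots> \<le> t * E"
      using \<open>a * D' \<le> E\<close> \<open>D' = D\<close> \<open>0 < t\<close> by (simp add: mult.left_commute)
    finally show "0 < t * E" .
    have "t * E \<le> b * (t * D)"
      using \<open>E \<le> b * D'\<close> \<open>D' = D\<close> \<open>0 < t\<close> by (simp add: mult.left_commute)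
    also have "\<dots> \<le> b * (c * f t)"
      using D(3) \<open>0 < a\<close> \<open>a \<le> b\<close> by (intro mult_left_mono) auto
    also have "\<dots> = c * b / a * (a * f t)"
      using \<open>0 < a\<close> by simp
    also have "\<dots> \<le> c * b / a * g t"
      using \<open>a * f t \<le> g t\<close> \<open>0 < a\<close> \<open>a \<le> b\<close> \<open>0 \<le> c\<close> by (intro mult_left_mono) auto
    finally show "t * E \<le> c * b / a * g t" .
  qed (rule E)
qed

lemma condC5_if_sandwiched:
  assumes "condC5 \<Omega> \<phi>" and "0 < a" and "a \<le> b"
    and sandwich: "ae_pairs \<Omega> (\<lambda>x y. \<forall>t>0. a * \<phi> t x y \<le> F t x y \<and>
          (\<exists>D E. ((\<lambda>s. \<phi> s x y) has_real_derivative D) (at t) \<and>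
            ((\<lambda>s. F s x y) has_real_derivative E) (at t) \<and> a * D \<le> E \<and> E \<le> b * D))"
  shows "condC5 \<Omega> F"
proof -
  from assms(1) obtain c2 where "1 < c2"
    and growth: "ae_pairs \<Omega> (\<lambda>x y. \<forall>t>0. \<exists>D. ((\<lambda>s. \<phi> s x y) has_real_derivative D) (at t) \<and>
        0 < t * D \<and> t * D \<le> c2 * \<phi> t x y)"
    unfolding condC5_def by blast
  have "c2 \<le> c2 * b / a"
    using \<open>1 < c2\<close> \<open>0 < a\<close> \<open>a \<le> b\<close> by (simp add: field_simps)
  with \<open>1 < c2\<close> have "1 < c2 * b / a"
    by linarith
  moreover have "ae_pairs \<Omega> (\<lambda>x y. \<forall>t>0. \<exists>E. ((\<lambda>s. F s x y) has_real_derivative E) (at t) \<and>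
      0 < t * E \<and> t * E \<le> c2 * b / a * F t x y)"
    using growth sandwich
  proof eventually_elim
    case (elim p)
    show ?case
      using elim growth_bound_if_sandwiched[of "\<lambda>s. \<phi> s (fst p) (snd p)" c2 a
          "\<lambda>s. F s (fst p) (snd p)" b]
        \<open>0 < a\<close> \<open>a \<le> b\<close> \<open>1 < c2\<close> by simp
  qed
  ultimately show ?thesis
    unfolding condC5_def by blast
qed

lemma condC4_imp_positive:
  assumes "condC4 \<Omega> \<phi>"
  shows "ae_pairs \<Omega> (\<lambda>x y. \<phi> 0 x y = 0 \<and> (\<forall>t>0. 0 < \<phi> t x y))"
  using assms unfolding condC4_def by (auto elim: eventually_mono)

lemma condC5_imp_increasing:
  assumes "condC5 \<Omega> \<phi>"
  shows "ae_pairs \<Omega> (\<lambda>x y. \<forall>t>0. \<exists>D. ((\<lambda>s. \<phi> s x y) has_real_derivative D) (at t) \<and> 0 < t * D)"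
  using assms unfolding condC5_def by (auto elim: eventually_mono)

theorem theorem2p10:
  fixes \<Omega> :: "'a::euclidean_space set"
    and \<phi> \<psi> :: "real \<Rightarrow> 'a \<Rightarrow> 'a \<Rightarrow> real"
    and c7 c8 :: real
  assumes "open \<Omega>" and "connected \<Omega>" and "\<Omega> \<noteq> {}"
    and C: "conds_C1_C5 \<Omega> \<phi>"
    and c7: "c7 > 0"
    and phi2: "ae_pairs \<Omega> (\<lambda>x y. \<forall>z>0.
          (deriv (\<lambda>s. \<phi> s x y) has_real_derivative deriv (deriv (\<lambda>s. \<phi> s x y)) z) (at z) \<and>
          deriv (deriv (\<lambda>s. \<phi> s x y)) z \<ge> c7 / z\<^sup>2 * \<phi> z x y)"
    and psi_meas: "\<forall>u. loc_integrable \<Omega> u \<longrightarrow>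
          (\<lambda>p. \<psi> \<bar>u (fst p) - u (snd p)\<bar> (fst p) (snd p)) \<in> borel_measurable (lebesgue_on (\<Omega> \<times> \<Omega>))"
    and c8: "c8 < 1"
    and psi: "ae_pairs \<Omega> (\<lambda>x y. \<exists>\<psi>1 \<psi>2 :: real \<Rightarrow> real.
          (\<forall>z\<ge>0. ((\<lambda>s. \<psi> s x y) has_real_derivative \<psi>1 z) (at z within {0..})) \<and>
          (\<forall>z\<ge>0. (\<psi>1 has_real_derivative \<psi>2 z) (at z within {0..})) \<and>
          continuous_on {0..} \<psi>2 \<and>
          \<psi> 0 x y = 0 \<and> \<psi>1 0 = 0 \<and>
          (\<forall>z>0. \<bar>\<psi>2 z\<bar> \<le> c8 * deriv (deriv (\<lambda>s. \<phi> s x y)) z))"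
  shows "conds_C1_C5 \<Omega> (\<lambda>z x y. \<phi> z x y + \<psi> z x y)"
proof -
  have C1: "condC1 \<Omega> \<phi>" and C3: "condC3 \<Omega> \<phi>" and C4: "condC4 \<Omega> \<phi>" and C5: "condC5 \<Omega> \<phi>"
    using C by (auto simp: conds_C1_C5_def)
  \<comment> \<open>c8 \<ge> 0 is only forced at pairs where the bound on \<psi>'' holds, hence the maximum.\<close>
  define e where "e = max 0 c8"
  have e: "0 \<le> e" "e < 1"
    using c8 by (auto simp: e_def)
  have perturbation: "ae_pairs \<Omega> (\<lambda>x y. \<exists>Q' Q''. small_perturbation (\<lambda>s. \<phi> s x y)
      (deriv (\<lambda>s. \<phi> s x y)) (deriv (deriv (\<lambda>s. \<phi> s x y))) (\<lambda>s. \<psi> s x y) Q' Q'' c7 e)"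
    using condC4_imp_positive[OF C4] condC5_imp_increasing[OF C5] phi2 psi
  proof eventually_elim
    case (elim p)
    show ?case
      using elim c7 c8 unfolding e_def by (intro impI ex_small_perturbation) auto
  qed
  have K: "0 < (1 - e) / (1 + e) * c7"
    using e c7 by simp
  show ?thesis
    unfolding conds_C1_C5_def
  proof (intro conjI)
    show "condC1 \<Omega> (\<lambda>z x y. \<phi> z x y + \<psi> z x y)"
      using C1 psi_meas by (intro condC1_add) (simp_all add: condC1_def)
    show "condC2 \<Omega> (\<lambda>z x y. \<phi> z x y + \<psi> z x y)"
      by (intro condC2_if_curvature_bound[OF K] eventually_mono[OF perturbation])
        (blast dest: small_perturbation.sum_curvature)
    show "condC3 \<Omega> (\<lambda>z x y. \<phi> z x y + \<psi> z x y)"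
      using e
      by (intro condC3_if_sandwiched[OF C3, of "1 - e" "1 + e"] eventually_mono[OF perturbation])
        (auto dest: small_perturbation.sum_sandwich)
    show "condC4 \<Omega> (\<lambda>z x y. \<phi> z x y + \<psi> z x y)"
      using e
      by (intro condC4_if_sandwiched[OF C4, of "1 - e" "1 + e"]
          eventually_mono[OF eventually_conj[OF perturbation condC4_imp_positive[OF C4]]])
        (auto dest: small_perturbation.sum_sandwich small_perturbation.Q_0)
    show "condC5 \<Omega> (\<lambda>z x y. \<phi> z x y + \<psi> z x y)"
      using e
      by (intro condC5_if_sandwiched[OF C5, of "1 - e" "1 + e"] eventually_mono[OF perturbation])
        (auto dest: small_perturbation.sum_deriv_sandwich)
  qed
qed

end
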